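(* Consider problem (P) in the setting $\mathbb Y=\mathbb R^m$, $m=m_1+m_2$, $C=\mathbb R^{m_1}_-\times\{0\}^{m_2}$ (no assumption on $D$). Let $\bar w\in\mathbb W$ be a feasible point of (P) at which RCPLD holds. Then $\bar w$ is AM-regular.
   Context: Standing setting: $\mathbb W,\mathbb Y$ are Euclidean spaces; problem (P) is $\min_w f(w)$ s.t. $G(w)\in C$, $w\in D$, where $f\colon\mathbb W\to\mathbb R$ and $G\colon\mathbb W\to\mathbb Y$ are continuously differentiable, $C\subset\mathbb Y$ is nonempty, closed, convex, and $D\subset\mathbb W$ is nonempty and closed. $G'(w)^*$ denotes the adjoint of the derivative. For a closed set $D$, $\Pi_D(x)$ is the (possibly multivalued) Euclidean projection onto $D$, and the limiting normal cone at $\bar w\in D$ is $\mathcal N^{\lim}_D(\bar w):=\limsup_{w\to\bar w}\operatorname{cone}(w-\Pi_D(w))$ (outer/Painlevé–Kuratowski limit), with $\mathcal N^{\lim}_D(w)=\varnothing$ for $w\notin D$. $\mathcal N_C$ is the normal cone of convex analysis ($\varnothing$ outside $C$). A feasible $\bar w$ is AM-regular if $\limsup_{w\to\bar w,\,z\to0}\mathcal M(w,z)\subset\mathcal M(\bar w,0)$, where $\mathcal M(w,z):=G'(w)^*\mathcal N_C(G(w)-z)+\mathcal N^{\lim}_D(w)$. In the present setting $G=(G_1,\dots,G_m)$, $I(\bar w):=\{i\in\{1,\dots,m_1\}: G_i(\bar w)=0\}$, $J:=\{m_1+1,\dots,m\}$. RCPLD holds at feasible $\bar w$ if: (i) the family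 $(\nabla G_i(w))_{i\in J}$ has constant rank for all $w$ in a neighborhood of $\bar w$; (ii) there is $S\subset J$ such that $(\nabla G_i(\bar w))_{i\in S}$ is a basis of $\operatorname{span}\{\nabla G_i(\bar w): i\in J\}$; (iii) for each $I\subset I(\bar w)$, each choice of multipliers $\lambda_i\ge0$ ($i\in I$), $\lambda_i\in\mathbb R$ ($i\in S$), not all zero, and each $\eta\in\mathcal N^{\lim}_D(\bar w)$ with $0=\sum_{i\in I\cup S}\lambda_i\nabla G_i(\bar w)+\eta$, there are neighborhoods $U$ of $\bar w$ and $V$ of $\eta$ such that for all $w\in U$ and $\tilde\eta\in\mathcal N^{\lim}_D(w)\cap V$ the vectors $(\nabla G_i(w))_{i\in I\cup S},\tilde\eta$ (if $\tilde\eta\ne0$), resp. $(\nabla G_i(w))_{i\in I\cup S}$ (if $\tilde\eta=0$), are linearly dependent. *)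

theory Defs
  imports "HOL-Analysis.Analysis"
begin

text \<open>The space Y = R^m is represented by functions nat => real that vanish
outside the index range {1..m}; its inner product is the sum over {1..m}.\<close>

definition Ycar :: "nat \<Rightarrow> (nat \<Rightarrow> real) set" where
  "Ycar m = {y. \<forall>i. i \<notin> {1..m} \<longrightarrow> y i = 0}"

definition innerY :: "nat \<Rightarrow> (nat \<Rightarrow> real) \<Rightarrow> (nat \<Rightarrow> real) \<Rightarrow> real" where
  "innerY m u v = (\<Sum>i\<in>{1..m}. u i * v i)"

definition Cset :: "nat \<Rightarrow> nat \<Rightarrow> (nat \<Rightarrow> real) set" where
  "Cset m1 m2 = {y \<in> Ycar (m1 + m2). (\<forall>i\<in>{1..m1}. y i \<le> 0) \<and> (\<forall>i\<in>{m1+1..m1+m2}. y i = 0)}"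

definition ncone_conv :: "nat \<Rightarrow> (nat \<Rightarrow> real) set \<Rightarrow> (nat \<Rightarrow> real) \<Rightarrow> (nat \<Rightarrow> real) set" where
  "ncone_conv m C y = (if y \<in> C then {v \<in> Ycar m. \<forall>c\<in>C. innerY m v (c - y) \<le> 0} else {})"

definition proj_set :: "'a::metric_space set \<Rightarrow> 'a \<Rightarrow> 'a set" where
  "proj_set D x = {p \<in> D. \<forall>q\<in>D. dist x p \<le> dist x q}"

text \<open>Limiting normal cone: outer (Painleve-Kuratowski) limit of cone(w - Pi_D(w)) as w -> wb;
  empty outside D.\<close>
definition ncone_lim :: "'a::real_normed_vector set \<Rightarrow> 'a \<Rightarrow> 'a set" where
  "ncone_lim D wb = (if wb \<in> D then
     {v. \<exists>w u. w \<longlonglongrightarrow> wb \<and> u \<longlonglongrightarrow> v \<and>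
        (\<forall>k. u k \<in> {t *\<^sub>R (w k - p) | t p. t \<ge> 0 \<and> p \<in> proj_set D (w k)})}
   else {})"

definition Gvec :: "nat \<Rightarrow> (nat \<Rightarrow> 'a \<Rightarrow> real) \<Rightarrow> 'a \<Rightarrow> (nat \<Rightarrow> real)" where
  "Gvec m G w = (\<lambda>i. if i \<in> {1..m} then G i w else 0)"

text \<open>Adjoint of the derivative G'(w)^* applied to lambda in Y, where G' i w is the gradient of G i at w.\<close>
definition adjG :: "nat \<Rightarrow> (nat \<Rightarrow> 'a \<Rightarrow> 'a::real_vector) \<Rightarrow> 'a \<Rightarrow> (nat \<Rightarrow> real) \<Rightarrow> 'a" where
  "adjG m G' w l = (\<Sum>i\<in>{1..m}. l i *\<^sub>R G' i w)"

definition Mset :: "nat \<Rightarrow> nat \<Rightarrow> (nat \<Rightarrow> 'a \<Rightarrow> real) \<Rightarrow> (nat \<Rightarrow> 'a \<Rightarrow> 'a::real_normed_vector)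
    \<Rightarrow> 'a set \<Rightarrow> 'a \<Rightarrow> (nat \<Rightarrow> real) \<Rightarrow> 'a set" where
  "Mset m1 m2 G G' D w z =
     {adjG (m1 + m2) G' w l + e | l e.
        l \<in> ncone_conv (m1 + m2) (Cset m1 m2) (Gvec (m1 + m2) G w - z) \<and> e \<in> ncone_lim D w}"

definition AM_regular :: "nat \<Rightarrow> nat \<Rightarrow> (nat \<Rightarrow> 'a \<Rightarrow> real) \<Rightarrow> (nat \<Rightarrow> 'a \<Rightarrow> 'a::real_normed_vector)
    \<Rightarrow> 'a set \<Rightarrow> 'a \<Rightarrow> bool" where
  "AM_regular m1 m2 G G' D wb \<longleftrightarrow>
     {v. \<exists>w z u. w \<longlonglongrightarrow> wb \<and> (\<forall>k. z k \<in> Ycar (m1 + m2)) \<and>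
          (\<forall>i. (\<lambda>k. z k i) \<longlonglongrightarrow> 0) \<and> u \<longlonglongrightarrow> v \<and>
          (\<forall>k. u k \<in> Mset m1 m2 G G' D (w k) (z k))}
     \<subseteq> Mset m1 m2 G G' D wb (\<lambda>_. 0)"

definition lindep_fam :: "nat set \<Rightarrow> (nat \<Rightarrow> 'a::real_vector) \<Rightarrow> bool" where
  "lindep_fam S v \<longleftrightarrow> (\<exists>c. (\<exists>i\<in>S. c i \<noteq> 0) \<and> (\<Sum>i\<in>S. c i *\<^sub>R v i) = 0)"

definition lindep_with :: "nat set \<Rightarrow> (nat \<Rightarrow> 'a::real_vector) \<Rightarrow> 'a \<Rightarrow> bool" where
  "lindep_with S v e \<longleftrightarrow>
     (\<exists>c t. (t \<noteq> 0 \<or> (\<exists>i\<in>S. c i \<noteq> 0)) \<and> (\<Sum>i\<in>S. c i *\<^sub>R v i) + t *\<^sub>R e = 0)"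

definition Iact :: "nat \<Rightarrow> (nat \<Rightarrow> 'a \<Rightarrow> real) \<Rightarrow> 'a \<Rightarrow> nat set" where
  "Iact m1 G wb = {i \<in> {1..m1}. G i wb = 0}"

definition Jset :: "nat \<Rightarrow> nat \<Rightarrow> nat set" where
  "Jset m1 m2 = {m1+1..m1+m2}"

definition RCPLD :: "nat \<Rightarrow> nat \<Rightarrow> (nat \<Rightarrow> 'a \<Rightarrow> real) \<Rightarrow> (nat \<Rightarrow> 'a \<Rightarrow> 'a::euclidean_space)
    \<Rightarrow> 'a set \<Rightarrow> 'a \<Rightarrow> bool" where
  "RCPLD m1 m2 G G' D wb \<longleftrightarrow>
     (\<exists>U. open U \<and> wb \<in> U \<and>
        (\<forall>w\<in>U. dim ((\<lambda>i. G' i w) ` Jset m1 m2) = dim ((\<lambda>i. G' i wb) ` Jset m1 m2))) \<and>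
     (\<exists>S \<subseteq> Jset m1 m2.
        \<not> lindep_fam S (\<lambda>i. G' i wb) \<and>
        span ((\<lambda>i. G' i wb) ` S) = span ((\<lambda>i. G' i wb) ` Jset m1 m2) \<and>
        (\<forall>I \<subseteq> Iact m1 G wb. \<forall>l eta.
           (\<forall>i\<in>I. l i \<ge> 0) \<and> (\<exists>i\<in>I \<union> S. l i \<noteq> 0) \<and> eta \<in> ncone_lim D wb \<and>
           (\<Sum>i\<in>I \<union> S. l i *\<^sub>R G' i wb) + eta = 0 \<longrightarrow>
           (\<exists>U V. open U \<and> wb \<in> U \<and> open V \<and> eta \<in> V \<and>
              (\<forall>w\<in>U. \<forall>e\<in>ncone_lim D w \<inter> V.
                 (e \<noteq> 0 \<longrightarrow> lindep_with (I \<union> S) (\<lambda>i. G' i w) e) \<and>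
                 (e = 0 \<longrightarrow> lindep_fam (I \<union> S) (\<lambda>i. G' i w))))))"

end

theory Submission
  imports Defs
begin

text \<open>Let u_k \<in> M(w_k, z_k) converge to v with w_k \<rightarrow> wb and z_k \<rightarrow> 0. For large k the
  constraints inactive at wb have zero multipliers, and by the constant rank condition the
  multipliers of the equality constraints can be moved onto the basis S. A conic Caratheodory
  argument then rewrites u_k with nonnegative multipliers on some P_k of active indices and a
  limiting normal vector \<eta>_k such that the gradients on P_k \<union> S, together with \<eta>_k if it is
  nonzero, are linearly independent. Passing to a subsequence with constant P_k = P, either the
  multipliers stay bounded, and their limits exhibit v \<in> M(wb, 0) because the graph of the
  limiting normal cone is closed, or after normalization they converge to a nontrivial relation
  between the gradients at wb and a limiting normal vector. In the latter case RCPLD forces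
  linear dependence near wb, contradicting the independence at w_k.\<close>

lemma lindep_fam_cong:
  assumes "\<forall>i\<in>A. V i = V' i"
  shows "lindep_fam A V \<longleftrightarrow> lindep_fam A V'"
proof -
  have "\<And>c. (\<Sum>i\<in>A. c i *\<^sub>R V i) = (\<Sum>i\<in>A. c i *\<^sub>R V' i)"
    using assms by (intro sum.cong) auto
  then show ?thesis unfolding lindep_fam_def by simp
qed

lemma lindep_fam_mono:
  assumes "lindep_fam A V" "A \<subseteq> B" "finite B"
  shows "lindep_fam B V"
proof -
  obtain c where c: "\<exists>i\<in>A. c i \<noteq> 0" "(\<Sum>i\<in>A. c i *\<^sub>R V i) = 0"
    using assms(1) unfolding lindep_fam_def by blast
  define d where "d i = (if i \<in> A then c i else 0)" for i
  have "(\<Sum>i\<in>B. d i *\<^sub>R V i) = (\<Sum>i\<in>A. c i *\<^sub>R V i)"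
    using assms(2,3) unfolding d_def by (intro sum.mono_neutral_cong_right) auto
  moreover have "\<exists>i\<in>B. d i \<noteq> 0" using c(1) assms(2) unfolding d_def by auto
  ultimately show ?thesis unfolding lindep_fam_def using c(2) by metis
qed

lemma lindep_with_scaleR:
  assumes "t \<noteq> 0"
  shows "lindep_with S v (t *\<^sub>R e) \<longleftrightarrow> lindep_with S v e"
proof
  assume "lindep_with S v (t *\<^sub>R e)"
  then obtain c s where h: "s \<noteq> 0 \<or> (\<exists>i\<in>S. c i \<noteq> 0)"
    "(\<Sum>i\<in>S. c i *\<^sub>R v i) + s *\<^sub>R t *\<^sub>R e = 0"
    unfolding lindep_with_def by blast
  have "s * t \<noteq> 0 \<or> (\<exists>i\<in>S. c i \<noteq> 0)" using h(1) assms by simp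
  moreover have "(\<Sum>i\<in>S. c i *\<^sub>R v i) + (s * t) *\<^sub>R e = 0" using h(2) by simp
  ultimately show "lindep_with S v e" unfolding lindep_with_def by (intro exI[of _ c] exI[of _ "s * t"]) simp
next
  assume "lindep_with S v e"
  then obtain c s where h: "s \<noteq> 0 \<or> (\<exists>i\<in>S. c i \<noteq> 0)"
    "(\<Sum>i\<in>S. c i *\<^sub>R v i) + s *\<^sub>R e = 0"
    unfolding lindep_with_def by blast
  have "s / t \<noteq> 0 \<or> (\<exists>i\<in>S. c i \<noteq> 0)" using h(1) assms by simp
  moreover have "(\<Sum>i\<in>S. c i *\<^sub>R v i) + (s / t) *\<^sub>R t *\<^sub>R e = 0" using h(2) assms by simp
  ultimately show "lindep_with S v (t *\<^sub>R e)" unfolding lindep_with_def by (intro exI[of _ c] exI[of _ "s / t"]) simp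
qed

lemma lindep_fam_normalized:
  fixes V :: "nat \<Rightarrow> 'a::real_vector"
  assumes "finite S"
  shows "lindep_fam S V \<longleftrightarrow> (\<exists>c. (\<Sum>i\<in>S. \<bar>c i\<bar>) = 1 \<and> (\<Sum>i\<in>S. c i *\<^sub>R V i) = 0)"
proof
  assume "lindep_fam S V"
  then obtain c i where c: "i \<in> S" "c i \<noteq> 0" "(\<Sum>i\<in>S. c i *\<^sub>R V i) = 0"
    unfolding lindep_fam_def by blast
  define n where "n = (\<Sum>i\<in>S. \<bar>c i\<bar>)"
  have "\<bar>c i\<bar> \<le> n" unfolding n_def using assms c(1) by (intro member_le_sum) auto
  then have n: "n > 0" using c(2) by linarith
  have "(\<Sum>i\<in>S. \<bar>c i / n\<bar>) = 1"
    using n by (simp add: n_def flip: sum_divide_distrib)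
  moreover have "(\<Sum>i\<in>S. (c i / n) *\<^sub>R V i) = (1 / n) *\<^sub>R (\<Sum>i\<in>S. c i *\<^sub>R V i)"
    by (simp add: scaleR_sum_right)
  ultimately show "\<exists>c. (\<Sum>i\<in>S. \<bar>c i\<bar>) = 1 \<and> (\<Sum>i\<in>S. c i *\<^sub>R V i) = 0"
    using c(3) by (intro exI[of _ "\<lambda>i. c i / n"]) simp
next
  assume "\<exists>c. (\<Sum>i\<in>S. \<bar>c i\<bar>) = 1 \<and> (\<Sum>i\<in>S. c i *\<^sub>R V i) = 0"
  then obtain c where "(\<Sum>i\<in>S. \<bar>c i\<bar>) = 1" "(\<Sum>i\<in>S. c i *\<^sub>R V i) = 0" by blast
  moreover from this(1) have "\<exists>i\<in>S. c i \<noteq> 0"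
    by (metis (mono_tags, lifting) abs_zero sum.neutral zero_neq_one)
  ultimately show "lindep_fam S V" unfolding lindep_fam_def by (intro exI[of _ c]) simp
qed

lemma not_lindep_fam_inj_on:
  assumes "\<not> lindep_fam S V" "finite S"
  shows "inj_on V S"
proof (rule inj_onI, rule ccontr)
  fix i j assume ij: "i \<in> S" "j \<in> S" "V i = V j" "i \<noteq> j"
  let ?c = "\<lambda>k. if k = i then 1 else if k = j then -1 else (0::real)"
  have "(\<Sum>k\<in>S. ?c k *\<^sub>R V k) = (\<Sum>k\<in>{i,j}. ?c k *\<^sub>R V k)"
    using ij assms(2) by (intro sum.mono_neutral_cong_right) auto
  also have "\<dots> = 0" using ij(3,4) by simp
  finally have "lindep_fam S V" unfolding lindep_fam_def using ij(1) by (intro exI[of _ ?c]) auto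
  then show False using assms(1) by simp
qed

lemma not_lindep_fam_independent:
  fixes V :: "nat \<Rightarrow> 'a::real_vector"
  assumes "\<not> lindep_fam S V" "finite S"
  shows "independent (V ` S)"
proof
  have inj: "inj_on V S" using not_lindep_fam_inj_on[OF assms] .
  assume "dependent (V ` S)"
  then obtain c x where c: "x \<in> V ` S" "c x \<noteq> 0" "(\<Sum>v\<in>V ` S. c v *\<^sub>R v) = 0"
    using assms(2) unfolding dependent_finite[OF finite_imageI[OF assms(2)]] by blast
  have "(\<Sum>i\<in>S. c (V i) *\<^sub>R V i) = 0" using c(3) by (simp add: sum.reindex[OF inj])
  moreover have "\<exists>i\<in>S. c (V i) \<noteq> 0" using c(1,2) by blast
  ultimately have "lindep_fam S V" unfolding lindep_fam_def by (intro exI[of _ "\<lambda>i. c (V i)"]) simp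
  then show False using assms(1) by simp
qed

lemma dim_image_not_lindep_fam:
  fixes V :: "nat \<Rightarrow> 'a::euclidean_space"
  assumes "\<not> lindep_fam S V" "finite S"
  shows "dim (V ` S) = card S"
  using dim_eq_card_independent[OF not_lindep_fam_independent[OF assms]]
    card_image[OF not_lindep_fam_inj_on[OF assms]] by simp

lemma span_combination_of_max_rank:
  fixes V :: "nat \<Rightarrow> 'a::euclidean_space"
  assumes "finite J" "S \<subseteq> J" "\<not> lindep_fam S V" "dim (V ` J) \<le> card S" "x \<in> span (V ` J)"
  obtains c where "x = (\<Sum>i\<in>S. c i *\<^sub>R V i)"
proof -
  have fS: "finite S" using assms(1,2) finite_subset by blast
  have "span (V ` S) = span (V ` J)"
    using assms(2,4) dim_image_not_lindep_fam[OF assms(3) fS] by (intro dim_eq_span) auto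
  then obtain u where "x = (\<Sum>v\<in>V ` S. u v *\<^sub>R v)"
    using assms(5) span_finite[of "V ` S"] fS by auto
  then have "x = (\<Sum>i\<in>S. u (V i) *\<^sub>R V i)"
    by (simp add: sum.reindex[OF not_lindep_fam_inj_on[OF assms(3) fS]])
  then show ?thesis by (rule that)
qed

lemma lindep_fam_positive_relation:
  fixes v :: "nat \<Rightarrow> 'a::real_vector"
  assumes "finite P" "finite E" "\<not> lindep_fam E v" "lindep_fam (P \<union> E) v"
  obtains d where "\<exists>i\<in>P. 0 < d i" "(\<Sum>i\<in>P \<union> E. d i *\<^sub>R v i) = 0"
proof -
  obtain d where d: "\<exists>i\<in>P \<union> E. d i \<noteq> 0" "(\<Sum>i\<in>P \<union> E. d i *\<^sub>R v i) = 0"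
    using assms(4) unfolding lindep_fam_def by blast
  have "\<exists>i\<in>P. d i \<noteq> 0"
  proof (rule ccontr)
    assume "\<not> ?thesis"
    then have "(\<Sum>i\<in>P \<union> E. d i *\<^sub>R v i) = (\<Sum>i\<in>E. d i *\<^sub>R v i)"
      using assms(1,2) by (intro sum.mono_neutral_right) auto
    then have "(\<Sum>i\<in>E. d i *\<^sub>R v i) = 0" "\<exists>i\<in>E. d i \<noteq> 0"
      using d \<open>\<not> (\<exists>i\<in>P. d i \<noteq> 0)\<close> by auto
    then have "lindep_fam E v" unfolding lindep_fam_def by (intro exI[of _ d]) simp
    then show False using assms(3) by simp
  qed
  then obtain i1 where i1: "i1 \<in> P" "d i1 \<noteq> 0" by blast
  show ?thesis
  proof (cases "0 < d i1")
    case True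
    then show ?thesis using that[of d] i1(1) d(2) by blast
  next
    case False
    then have "0 < - d i1" using i1(2) by simp
    moreover have "(\<Sum>i\<in>P \<union> E. (- d i) *\<^sub>R v i) = 0" using d(2) by (simp add: sum_negf)
    ultimately show ?thesis using that[of "\<lambda>i. - d i"] i1(1) by blast
  qed
qed

text \<open>Subtracting the largest multiple of the relation d that keeps the coefficients on P
  nonnegative kills the coefficient of some index i0.\<close>
lemma conic_combination_drop_index:
  fixes v :: "nat \<Rightarrow> 'a::real_vector"
  assumes "finite P" "finite E" "\<forall>i\<in>P. 0 \<le> c i"
    and d: "\<exists>i\<in>P. 0 < d i" "(\<Sum>i\<in>P \<union> E. d i *\<^sub>R v i) = 0"
  obtains i0 c' where "i0 \<in> P" "\<forall>i\<in>P - {i0}. 0 \<le> c' i"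
    "(\<Sum>i\<in>(P - {i0}) \<union> E. c' i *\<^sub>R v i) = (\<Sum>i\<in>P \<union> E. c i *\<^sub>R v i)"
proof -
  define Q where "Q = {i\<in>P. 0 < d i}"
  have Q: "finite Q" "Q \<noteq> {}" using assms(1) d(1) by (auto simp: Q_def)
  have "Min ((\<lambda>i. c i / d i) ` Q) \<in> (\<lambda>i. c i / d i) ` Q" using Q by (intro Min_in) auto
  then obtain i0 where i0: "i0 \<in> Q" "Min ((\<lambda>i. c i / d i) ` Q) = c i0 / d i0"
    by blast
  define \<tau> where "\<tau> = c i0 / d i0"
  have i0P: "i0 \<in> P" "0 < d i0" using i0 by (auto simp: Q_def)
  have \<tau>: "0 \<le> \<tau>" using i0P assms(3) by (simp add: \<tau>_def)
  define c' where "c' i = c i - \<tau> * d i" for i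
  have c'_i0: "c' i0 = 0" using i0P by (simp add: c'_def \<tau>_def)
  have "\<forall>i\<in>P - {i0}. 0 \<le> c' i"
  proof
    fix i assume i: "i \<in> P - {i0}"
    show "0 \<le> c' i"
    proof (cases "0 < d i")
      case True
      then have "i \<in> Q" using i by (simp add: Q_def)
      then have "\<tau> \<le> c i / d i" unfolding \<tau>_def i0(2)[symmetric] using Q(1) by (intro Min_le) auto
      then show ?thesis using True by (simp add: c'_def pos_le_divide_eq)
    next
      case False
      then have "\<tau> * d i \<le> 0" using \<tau> by (simp add: mult_nonneg_nonpos)
      moreover have "0 \<le> c i" using assms(3) i by simp
      ultimately show ?thesis by (simp add: c'_def)
    qed
  qed
  moreover have "(\<Sum>i\<in>(P - {i0}) \<union> E. c' i *\<^sub>R v i) = (\<Sum>i\<in>P \<union> E. c' i *\<^sub>R v i)"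
    using i0P c'_i0 assms(1,2) by (intro sum.mono_neutral_left) auto
  moreover have "\<dots> = (\<Sum>i\<in>P \<union> E. c i *\<^sub>R v i) - \<tau> *\<^sub>R (\<Sum>i\<in>P \<union> E. d i *\<^sub>R v i)"
    by (simp add: c'_def scaleR_diff_left sum_subtractf scaleR_sum_right)
  ultimately show ?thesis using that[OF i0P(1)] d(2) by simp
qed

lemma caratheodory_reduction:
  fixes v :: "nat \<Rightarrow> 'a::real_vector"
  assumes "finite P" "finite E" "P \<inter> E = {}" "\<not> lindep_fam E v" "\<forall>i\<in>P. 0 \<le> c i"
  shows "\<exists>P' c'. P' \<subseteq> P \<and> (\<forall>i\<in>P'. 0 \<le> c' i) \<and>
     (\<Sum>i\<in>P' \<union> E. c' i *\<^sub>R v i) = (\<Sum>i\<in>P \<union> E. c i *\<^sub>R v i) \<and> \<not> lindep_fam (P' \<union> E) v"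
  using assms
proof (induction "card P" arbitrary: P c rule: less_induct)
  case less
  show ?case
  proof (cases "lindep_fam (P \<union> E) v")
    case False
    then show ?thesis using less.prems by (intro exI[of _ P] exI[of _ c]) auto
  next
    case True
    obtain d where "\<exists>i\<in>P. 0 < d i" "(\<Sum>i\<in>P \<union> E. d i *\<^sub>R v i) = 0"
      using lindep_fam_positive_relation[OF less.prems(1,2,4) True] by blast
    then obtain i0 c'' where i0: "i0 \<in> P" "\<forall>i\<in>P - {i0}. 0 \<le> c'' i"
      "(\<Sum>i\<in>(P - {i0}) \<union> E. c'' i *\<^sub>R v i) = (\<Sum>i\<in>P \<union> E. c i *\<^sub>R v i)"
      using conic_combination_drop_index[OF less.prems(1,2,5)] by blast
    have "card (P - {i0}) < card P" using i0(1) less.prems(1) by (meson card_Diff1_less)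
    then obtain P' c' where "P' \<subseteq> P - {i0}" "\<forall>i\<in>P'. 0 \<le> c' i"
      "(\<Sum>i\<in>P' \<union> E. c' i *\<^sub>R v i) = (\<Sum>i\<in>(P - {i0}) \<union> E. c'' i *\<^sub>R v i)"
      "\<not> lindep_fam (P' \<union> E) v"
      using less.hyps[of "P - {i0}" c''] less.prems i0(2) by auto
    then show ?thesis using i0(3) by (intro exI[of _ P'] exI[of _ c']) auto
  qed
qed

lemma sum_scaleR_fun_upd:
  fixes v :: "'i \<Rightarrow> 'a::real_vector"
  assumes "finite A"
  shows "(\<Sum>i\<in>A. f i *\<^sub>R (v(x := e)) i) = (if x \<in> A then f x *\<^sub>R e else 0) + (\<Sum>i\<in>A - {x}. f i *\<^sub>R v i)"
proof -
  have rest: "(\<Sum>i\<in>A - {x}. f i *\<^sub>R (v(x := e)) i) = (\<Sum>i\<in>A - {x}. f i *\<^sub>R v i)"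
    by (intro sum.cong) auto
  show ?thesis
  proof (cases "x \<in> A")
    case True
    then show ?thesis using sum.remove[OF assms True, of "\<lambda>i. f i *\<^sub>R (v(x := e)) i"] rest by simp
  next
    case False
    then have "A - {x} = A" by simp
    then show ?thesis using rest False by simp
  qed
qed

lemma lindep_with_iff_lindep_fam_insert:
  fixes v :: "nat \<Rightarrow> 'a::real_vector"
  assumes "finite S" "x \<notin> S"
  shows "lindep_with S v e \<longleftrightarrow> lindep_fam (insert x S) (v(x := e))"
proof -
  have sum_eq: "(\<Sum>i\<in>insert x S. d i *\<^sub>R (v(x := e)) i) = (\<Sum>i\<in>S. d i *\<^sub>R v i) + d x *\<^sub>R e" for d
    using sum_scaleR_fun_upd[of "insert x S" d v x e] assms by (simp add: add.commute)
  show ?thesis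
  proof
    assume "lindep_with S v e"
    then obtain c t where c: "t \<noteq> 0 \<or> (\<exists>i\<in>S. c i \<noteq> 0)" "(\<Sum>i\<in>S. c i *\<^sub>R v i) + t *\<^sub>R e = 0"
      unfolding lindep_with_def by blast
    have "(\<Sum>i\<in>S. (c(x := t)) i *\<^sub>R v i) = (\<Sum>i\<in>S. c i *\<^sub>R v i)"
      using assms(2) by (intro sum.cong) auto
    then have "(\<Sum>i\<in>insert x S. (c(x := t)) i *\<^sub>R (v(x := e)) i) = 0" using sum_eq c(2) by simp
    moreover have "\<exists>i\<in>insert x S. (c(x := t)) i \<noteq> 0" using c(1) assms(2) by auto
    ultimately show "lindep_fam (insert x S) (v(x := e))"
      unfolding lindep_fam_def by (intro exI[of _ "c(x := t)"]) simp
  next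
    assume "lindep_fam (insert x S) (v(x := e))"
    then obtain d where d: "\<exists>i\<in>insert x S. d i \<noteq> 0" "(\<Sum>i\<in>insert x S. d i *\<^sub>R (v(x := e)) i) = 0"
      unfolding lindep_fam_def by blast
    then have "d x \<noteq> 0 \<or> (\<exists>i\<in>S. d i \<noteq> 0)" "(\<Sum>i\<in>S. d i *\<^sub>R v i) + d x *\<^sub>R e = 0"
      using sum_eq by auto
    then show "lindep_with S v e" unfolding lindep_with_def by (intro exI[of _ d] exI[of _ "d x"]) simp
  qed
qed

lemma caratheodory_reduction_with_vector:
  fixes v :: "nat \<Rightarrow> 'a::real_vector"
  assumes "finite P" "finite E" "P \<inter> E = {}" "0 \<notin> P \<union> E" "\<not> lindep_fam E v"
    "\<forall>i\<in>P. 0 \<le> c i" "0 \<le> a"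
  obtains P' c' a' where "P' \<subseteq> P" "\<forall>i\<in>P'. 0 \<le> c' i" "0 \<le> a'"
    "(\<Sum>i\<in>P' \<union> E. c' i *\<^sub>R v i) + a' *\<^sub>R e = (\<Sum>i\<in>P \<union> E. c i *\<^sub>R v i) + a *\<^sub>R e"
    "\<not> lindep_fam (P' \<union> E) v"
    "a' *\<^sub>R e \<noteq> 0 \<Longrightarrow> \<not> lindep_with (P' \<union> E) v (a' *\<^sub>R e)"
proof -
  text \<open>The extra vector is attached to the family at the unused index 0.\<close>
  define v0 where "v0 = v(0 := e)"
  have v0_v: "lindep_fam A v0 \<longleftrightarrow> lindep_fam A v" if "0 \<notin> A" for A
    using that by (intro lindep_fam_cong) (auto simp: v0_def)
  have zero_E: "0 \<notin> E" using assms(4) by simp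
  have indep_E: "\<not> lindep_fam E v0" using v0_v[OF zero_E] assms(5) by simp
  have "finite (insert 0 P)" "insert 0 P \<inter> E = {}" "\<forall>i\<in>insert 0 P. 0 \<le> (c(0 := a)) i"
    using assms(1,3,4,6,7) by auto
  from caratheodory_reduction[OF this(1) assms(2) this(2) indep_E this(3)]
  obtain Q c' where Q: "Q \<subseteq> insert 0 P" "\<forall>i\<in>Q. 0 \<le> c' i"
    "(\<Sum>i\<in>Q \<union> E. c' i *\<^sub>R v0 i) = (\<Sum>i\<in>insert 0 P \<union> E. (c(0 := a)) i *\<^sub>R v0 i)"
    "\<not> lindep_fam (Q \<union> E) v0"
    by (elim exE conjE) (rule that)
  have fin: "finite (Q \<union> E)" using finite_subset[OF Q(1)] assms(1,2) by simp
  have minus_0: "(Q \<union> E) - {0} = (Q - {0}) \<union> E" using zero_E by auto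
  define a' where "a' = (if 0 \<in> Q then c' 0 else 0)"
  have "(\<Sum>i\<in>Q \<union> E. c' i *\<^sub>R v0 i) = a' *\<^sub>R e + (\<Sum>i\<in>(Q - {0}) \<union> E. c' i *\<^sub>R v i)"
    using sum_scaleR_fun_upd[OF fin, of c' v 0 e] by (simp add: v0_def a'_def zero_E minus_0)
  moreover have "(\<Sum>i\<in>insert 0 P \<union> E. (c(0 := a)) i *\<^sub>R v0 i) = a *\<^sub>R e + (\<Sum>i\<in>P \<union> E. c i *\<^sub>R v i)"
  proof -
    have "(\<Sum>i\<in>P \<union> E. (c(0 := a)) i *\<^sub>R v i) = (\<Sum>i\<in>P \<union> E. c i *\<^sub>R v i)"
      using assms(4) by (intro sum.cong) auto
    moreover have "insert 0 P \<union> E - {0} = P \<union> E" using assms(4) by auto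
    ultimately show ?thesis
      using sum_scaleR_fun_upd[of "insert 0 P \<union> E" "c(0 := a)" v 0 e] assms(1,2) by (simp add: v0_def)
  qed
  ultimately have sum_eq: "(\<Sum>i\<in>(Q - {0}) \<union> E. c' i *\<^sub>R v i) + a' *\<^sub>R e = (\<Sum>i\<in>P \<union> E. c i *\<^sub>R v i) + a *\<^sub>R e"
    using Q(3) by (simp only: add.commute)
  have indep: "\<not> lindep_fam ((Q - {0}) \<union> E) v"
  proof
    assume "lindep_fam ((Q - {0}) \<union> E) v"
    then have "lindep_fam ((Q - {0}) \<union> E) v0" using v0_v[of "(Q - {0}) \<union> E"] zero_E by simp
    then have "lindep_fam (Q \<union> E) v0" by (rule lindep_fam_mono) (use fin in auto)
    then show False using Q(4) by simp
  qed
  have indep_with: "\<not> lindep_with ((Q - {0}) \<union> E) v (a' *\<^sub>R e)" if "a' *\<^sub>R e \<noteq> 0"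
  proof
    assume "lindep_with ((Q - {0}) \<union> E) v (a' *\<^sub>R e)"
    moreover have Q0: "0 \<in> Q" "a' \<noteq> 0" using that by (auto simp: a'_def split: if_splits)
    ultimately have "lindep_with ((Q - {0}) \<union> E) v e" by (simp add: lindep_with_scaleR)
    moreover have "insert 0 ((Q - {0}) \<union> E) = Q \<union> E" using Q0(1) by auto
    ultimately have "lindep_fam (Q \<union> E) v0"
      using lindep_with_iff_lindep_fam_insert[of "(Q - {0}) \<union> E" 0 v e] fin zero_E
      by (simp add: v0_def)
    then show False using Q(4) by simp
  qed
  have "Q - {0} \<subseteq> P" "\<forall>i\<in>Q - {0}. 0 \<le> c' i" "0 \<le> a'"
    using Q(1,2) by (auto simp: a'_def)
  from that[OF this sum_eq indep indep_with] show ?thesis .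
qed

definition proximal_cone :: "'a::real_normed_vector set \<Rightarrow> 'a \<Rightarrow> 'a set" where
  "proximal_cone D w = {t *\<^sub>R (w - p) | t p. 0 \<le> t \<and> p \<in> proj_set D w}"

lemma ncone_lim_memD: "e \<in> ncone_lim D w \<Longrightarrow> w \<in> D"
  unfolding ncone_lim_def by (auto split: if_splits)

lemma mem_ncone_lim_iff:
  assumes "w \<in> D"
  shows "e \<in> ncone_lim D w \<longleftrightarrow>
    (\<exists>W U. W \<longlonglongrightarrow> w \<and> U \<longlonglongrightarrow> e \<and> (\<forall>k. U k \<in> proximal_cone D (W k)))"
  using assms unfolding ncone_lim_def proximal_cone_def by simp

lemma ncone_lim_scaleR:
  fixes D :: "'a::real_normed_vector set"
  assumes "e \<in> ncone_lim D w" "0 \<le> s"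
  shows "s *\<^sub>R e \<in> ncone_lim D w"
proof -
  have wD: "w \<in> D" using assms(1) by (rule ncone_lim_memD)
  obtain W U where WU: "W \<longlonglongrightarrow> w" "U \<longlonglongrightarrow> e" "\<forall>k. U k \<in> proximal_cone D (W k)"
    using assms(1) unfolding mem_ncone_lim_iff[OF wD] by blast
  have "s *\<^sub>R U k \<in> proximal_cone D (W k)" for k
  proof -
    obtain t p where "U k = t *\<^sub>R (W k - p)" "0 \<le> t" "p \<in> proj_set D (W k)"
      using WU(3) unfolding proximal_cone_def by blast
    then show ?thesis
      using assms(2) unfolding proximal_cone_def by (intro CollectI exI[of _ "s * t"] exI[of _ p]) simp
  qed
  moreover have "(\<lambda>k. s *\<^sub>R U k) \<longlonglongrightarrow> s *\<^sub>R e" using WU(2) by (intro tendsto_intros)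
  ultimately show ?thesis unfolding mem_ncone_lim_iff[OF wD] using WU(1) by blast
qed

text \<open>A diagonal sequence of proximal normals realizes the limit.\<close>
lemma ncone_lim_closed_graph:
  fixes D :: "'a::real_normed_vector set"
  assumes "w \<longlonglongrightarrow> wb" "e \<longlonglongrightarrow> eb" "\<forall>k. e k \<in> ncone_lim D (w k)" "wb \<in> D"
  shows "eb \<in> ncone_lim D wb"
proof -
  have "\<exists>W U. dist W (w k) < 1 / real (Suc k) \<and> dist U (e k) < 1 / real (Suc k) \<and>
      U \<in> proximal_cone D W" for k
  proof -
    have wk: "w k \<in> D" using assms(3) ncone_lim_memD by blast
    obtain W U where WU: "W \<longlonglongrightarrow> w k" "U \<longlonglongrightarrow> e k" "\<forall>n. U n \<in> proximal_cone D (W n)"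
      using assms(3) mem_ncone_lim_iff[OF wk] by blast
    have "\<forall>\<^sub>F n in sequentially. dist (W n) (w k) < 1 / real (Suc k) \<and> dist (U n) (e k) < 1 / real (Suc k)"
      using WU(1,2) by (intro eventually_conj tendstoD) auto
    then obtain n where "dist (W n) (w k) < 1 / real (Suc k) \<and> dist (U n) (e k) < 1 / real (Suc k)"
      using eventually_happens'[OF sequentially_bot] by blast
    then show ?thesis using WU(3) by blast
  qed
  then obtain W U where WU: "\<And>k. dist (W k) (w k) < 1 / real (Suc k)"
    "\<And>k. dist (U k) (e k) < 1 / real (Suc k)" "\<And>k. U k \<in> proximal_cone D (W k)"
    by metis
  have "W \<longlonglongrightarrow> wb"
    using assms(1) by (rule Lim_transform) (use WU(1) in \<open>auto intro: LIMSEQ_norm_0 simp: dist_norm\<close>)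
  moreover have "U \<longlonglongrightarrow> eb"
    using assms(2) by (rule Lim_transform) (use WU(2) in \<open>auto intro: LIMSEQ_norm_0 simp: dist_norm\<close>)
  ultimately show ?thesis unfolding mem_ncone_lim_iff[OF assms(4)] using WU(3) by blast
qed

lemma innerY_indicator:
  assumes "i \<in> {1..m}"
  shows "innerY m l (\<lambda>j. if j = i then a else 0) = l i * a"
proof -
  have "innerY m l (\<lambda>j. if j = i then a else 0) = (\<Sum>j\<in>{1..m}. if j = i then l i * a else 0)"
    unfolding innerY_def by (intro sum.cong) auto
  also have "\<dots> = l i * a" using assms by simp
  finally show ?thesis .
qed

lemma ncone_conv_CsetD:
  assumes "l \<in> ncone_conv (m1 + m2) (Cset m1 m2) y" "i \<in> {1..m1}"
  shows "0 \<le> l i" "y i < 0 \<Longrightarrow> l i = 0"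
proof -
  have yC: "y \<in> Cset m1 m2" using assms(1) unfolding ncone_conv_def by (auto split: if_splits)
  then have normal: "innerY (m1 + m2) l (c - y) \<le> 0" if "c \<in> Cset m1 m2" for c
    using assms(1) that unfolding ncone_conv_def by auto
  have im: "i \<in> {1..m1 + m2}" using assms(2) by auto
  have yi: "y i \<le> 0" using yC assms(2) unfolding Cset_def by auto
  have "y(i := y i - 1) \<in> Cset m1 m2"
    using yC assms(2) yi unfolding Cset_def Ycar_def
    by (auto simp del: atLeastAtMost_iff) (auto simp: atLeastAtMost_iff)
  moreover have "y(i := y i - 1) - y = (\<lambda>j. if j = i then -1 else 0)" by (auto simp: fun_eq_iff)
  ultimately have "l i * (-1) \<le> 0" using normal innerY_indicator[OF im, of l "-1"] by metis
  then show l_nonneg: "0 \<le> l i" by simp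
  assume "y i < 0"
  have "y(i := 0) \<in> Cset m1 m2" using yC assms(2) unfolding Cset_def Ycar_def by auto
  moreover have "y(i := 0) - y = (\<lambda>j. if j = i then - y i else 0)" by (auto simp: fun_eq_iff)
  ultimately have "l i * (- y i) \<le> 0" using normal innerY_indicator[OF im, of l "- y i"] by metis
  then show "l i = 0" using l_nonneg \<open>y i < 0\<close> by (auto simp: zero_le_mult_iff)
qed

lemma finite_Iact: "finite (Iact m1 G wb)"
  by (rule finite_subset[of _ "{1..m1}"]) (auto simp: Iact_def)

lemma finite_Jset: "finite (Jset m1 m2)"
  by (simp add: Jset_def)

lemma sum_plus_ncone_lim_mem_Mset:
  fixes G' :: "nat \<Rightarrow> 'a \<Rightarrow> 'a::real_normed_vector"
  assumes feasible: "Gvec (m1 + m2) G wb \<in> Cset m1 m2"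
    and I: "I \<subseteq> Iact m1 G wb" and S: "S \<subseteq> Jset m1 m2"
    and a: "\<forall>i\<in>I. 0 \<le> a i" and \<eta>: "\<eta> \<in> ncone_lim D wb"
  shows "(\<Sum>i\<in>I \<union> S. a i *\<^sub>R G' i wb) + \<eta> \<in> Mset m1 m2 G G' D wb (\<lambda>_. 0)"
proof -
  define l where "l i = (if i \<in> I \<union> S then a i else 0)" for i
  have IS: "I \<union> S \<subseteq> {1..m1 + m2}" using I S by (auto simp: Iact_def Jset_def)
  have "l j * (c - Gvec (m1 + m2) G wb) j \<le> 0" if c: "c \<in> Cset m1 m2" for c j
  proof (cases "j \<in> I")
    case True
    then have "G j wb = 0" "c j \<le> 0" "j \<in> {1..m1}" using I c by (auto simp: Iact_def Cset_def)
    then show ?thesis using True a by (simp add: l_def Gvec_def mult_nonneg_nonpos)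
  next
    case False
    show ?thesis
    proof (cases "j \<in> S")
      case True
      then have "j \<in> {m1 + 1..m1 + m2}" using S by (auto simp: Jset_def)
      then have "c j = 0" "Gvec (m1 + m2) G wb j = 0" using c feasible by (auto simp: Cset_def)
      then show ?thesis by simp
    qed (use False in \<open>simp add: l_def\<close>)
  qed
  moreover have "Gvec (m1 + m2) G wb - (\<lambda>_. 0) = Gvec (m1 + m2) G wb" by (simp add: fun_eq_iff)
  ultimately have "l \<in> ncone_conv (m1 + m2) (Cset m1 m2) (Gvec (m1 + m2) G wb - (\<lambda>_. 0))"
    using feasible IS unfolding ncone_conv_def innerY_def Ycar_def
    by (auto simp: l_def intro!: sum_nonpos)
  moreover have "adjG (m1 + m2) G' wb l = (\<Sum>i\<in>I \<union> S. a i *\<^sub>R G' i wb)"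
    unfolding adjG_def using IS by (intro sum.mono_neutral_cong_right) (auto simp: l_def)
  ultimately show ?thesis
    using \<eta> unfolding Mset_def by (intro CollectI exI[of _ l] exI[of _ \<eta>]) simp
qed

definition reduced_representation ::
    "'a::real_normed_vector set \<Rightarrow> (nat \<Rightarrow> 'a \<Rightarrow> 'a) \<Rightarrow> nat set \<Rightarrow> 'a \<Rightarrow> 'a \<Rightarrow> nat set
      \<Rightarrow> (nat \<Rightarrow> real) \<Rightarrow> 'a \<Rightarrow> bool" where
  "reduced_representation D G' S w x P c \<eta> \<longleftrightarrow>
     (\<forall>i\<in>P. 0 \<le> c i) \<and> \<eta> \<in> ncone_lim D w \<and> x = (\<Sum>i\<in>P \<union> S. c i *\<^sub>R G' i w) + \<eta> \<and>
     \<not> lindep_fam (P \<union> S) (\<lambda>i. G' i w) \<and> (\<eta> \<noteq> 0 \<longrightarrow> \<not> lindep_with (P \<union> S) (\<lambda>i. G' i w) \<eta>)"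

lemma Mset_active_representation:
  fixes G :: "nat \<Rightarrow> 'a::euclidean_space \<Rightarrow> real" and G' :: "nat \<Rightarrow> 'a \<Rightarrow> 'a"
  assumes x: "x \<in> Mset m1 m2 G G' D w z"
    and inactive: "\<forall>i\<in>{1..m1} - I. G i w < z i"
    and I: "I \<subseteq> {1..m1}" and S: "S \<subseteq> Jset m1 m2"
    and indep: "\<not> lindep_fam S (\<lambda>i. G' i w)"
    and rank: "dim ((\<lambda>i. G' i w) ` Jset m1 m2) \<le> card S"
  obtains c e where "\<forall>i\<in>I. 0 \<le> c i" "e \<in> ncone_lim D w" "x = (\<Sum>i\<in>I \<union> S. c i *\<^sub>R G' i w) + e"
proof -
  let ?J = "Jset m1 m2"
  obtain l e where x_eq: "x = adjG (m1 + m2) G' w l + e"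
    and l: "l \<in> ncone_conv (m1 + m2) (Cset m1 m2) (Gvec (m1 + m2) G w - z)"
    and e: "e \<in> ncone_lim D w"
    using x unfolding Mset_def by blast
  have l_nonneg: "\<forall>i\<in>I. 0 \<le> l i" using ncone_conv_CsetD(1)[OF l] I by blast
  have l_inactive: "l i = 0" if "i \<in> {1..m1} - I" for i
    using ncone_conv_CsetD(2)[OF l] that inactive by (simp add: Gvec_def)
  have J: "?J = {m1 + 1..m1 + m2}" by (simp add: Jset_def)
  have fin: "finite I" "finite S"
    using I finite_subset[OF S finite_Jset] finite_subset by auto
  have IJ: "I \<inter> ?J = {}" using I J by auto
  then have IS: "I \<inter> S = {}" using S by blast
  have "adjG (m1 + m2) G' w l = (\<Sum>i\<in>I \<union> ?J. l i *\<^sub>R G' i w)"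
    unfolding adjG_def using I J l_inactive by (intro sum.mono_neutral_cong_right) auto
  also have "\<dots> = (\<Sum>i\<in>I. l i *\<^sub>R G' i w) + (\<Sum>i\<in>?J. l i *\<^sub>R G' i w)"
    using fin(1) finite_Jset IJ by (simp add: sum.union_disjoint)
  finally have adj: "adjG (m1 + m2) G' w l = (\<Sum>i\<in>I. l i *\<^sub>R G' i w) + (\<Sum>i\<in>?J. l i *\<^sub>R G' i w)" .
  have "(\<Sum>i\<in>?J. l i *\<^sub>R G' i w) \<in> span ((\<lambda>i. G' i w) ` ?J)"
    by (intro span_sum span_scale span_base) auto
  then obtain \<mu> where \<mu>: "(\<Sum>i\<in>?J. l i *\<^sub>R G' i w) = (\<Sum>i\<in>S. \<mu> i *\<^sub>R G' i w)"
    using span_combination_of_max_rank[OF finite_Jset S indep rank] by blast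
  define c where "c i = (if i \<in> I then l i else \<mu> i)" for i
  have "(\<Sum>i\<in>I \<union> S. c i *\<^sub>R G' i w) = (\<Sum>i\<in>I. c i *\<^sub>R G' i w) + (\<Sum>i\<in>S. c i *\<^sub>R G' i w)"
    using fin IS by (simp add: sum.union_disjoint)
  also have "\<dots> = (\<Sum>i\<in>I. l i *\<^sub>R G' i w) + (\<Sum>i\<in>S. \<mu> i *\<^sub>R G' i w)"
    using IS by (auto simp: c_def intro!: sum.cong arg_cong2[where f = "(+)"])
  finally have "x = (\<Sum>i\<in>I \<union> S. c i *\<^sub>R G' i w) + e" using x_eq adj \<mu> by simp
  moreover have "\<forall>i\<in>I. 0 \<le> c i" using l_nonneg by (simp add: c_def)
  ultimately show ?thesis using that e by blast
qed

lemma Mset_reduced_representation: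
  fixes G :: "nat \<Rightarrow> 'a::euclidean_space \<Rightarrow> real" and G' :: "nat \<Rightarrow> 'a \<Rightarrow> 'a"
  assumes x: "x \<in> Mset m1 m2 G G' D w z"
    and inactive: "\<forall>i\<in>{1..m1} - I. G i w < z i"
    and I: "I \<subseteq> {1..m1}" and S: "S \<subseteq> Jset m1 m2"
    and indep: "\<not> lindep_fam S (\<lambda>i. G' i w)"
    and rank: "dim ((\<lambda>i. G' i w) ` Jset m1 m2) \<le> card S"
  obtains P c \<eta> where "P \<subseteq> I" "reduced_representation D G' S w x P c \<eta>"
proof -
  obtain c0 e where c0: "\<forall>i\<in>I. 0 \<le> c0 i" and e: "e \<in> ncone_lim D w"
    and x_rep: "x = (\<Sum>i\<in>I \<union> S. c0 i *\<^sub>R G' i w) + 1 *\<^sub>R e"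
    using Mset_active_representation[OF assms] by auto
  have fin: "finite I" "finite S"
    using I finite_subset[OF S finite_Jset] finite_subset by auto
  have "I \<inter> Jset m1 m2 = {}" "0 \<notin> I \<union> Jset m1 m2" using I by (auto simp: Jset_def)
  then have "I \<inter> S = {}" "0 \<notin> I \<union> S" using S by blast+
  from caratheodory_reduction_with_vector[OF fin this indep c0 zero_le_one]
  obtain P c a where P: "P \<subseteq> I" "\<forall>i\<in>P. 0 \<le> c i" "0 \<le> a"
    "(\<Sum>i\<in>P \<union> S. c i *\<^sub>R G' i w) + a *\<^sub>R e = (\<Sum>i\<in>I \<union> S. c0 i *\<^sub>R G' i w) + 1 *\<^sub>R e"
    "\<not> lindep_fam (P \<union> S) (\<lambda>i. G' i w)"
    "a *\<^sub>R e \<noteq> 0 \<Longrightarrow> \<not> lindep_with (P \<union> S) (\<lambda>i. G' i w) (a *\<^sub>R e)"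
    by blast
  have "reduced_representation D G' S w x P c (a *\<^sub>R e)"
    unfolding reduced_representation_def
    using P(2,5,6) P(4)[folded x_rep] ncone_lim_scaleR[OF e P(3)] by simp
  then show ?thesis using that P(1) by blast
qed

lemma bounded_family_convergent_subseq:
  fixes f :: "nat \<Rightarrow> nat \<Rightarrow> real"
  assumes "finite K" "\<forall>k. \<forall>i\<in>K. \<bar>f k i\<bar> \<le> B"
  obtains r g where "strict_mono r" "\<forall>i\<in>K. (\<lambda>k. f (r k) i) \<longlonglongrightarrow> g i"
proof -
  have "\<exists>r g. strict_mono r \<and> (\<forall>i\<in>K. (\<lambda>k. f (r k) i) \<longlonglongrightarrow> g i)"
    using assms
  proof (induction K rule: finite_induct)
    case empty
    show ?case by (intro exI[of _ "\<lambda>k. k"]) (simp add: strict_mono_def)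
  next
    case (insert j K)
    then obtain r g where rg: "strict_mono r" "\<forall>i\<in>K. (\<lambda>k. f (r k) i) \<longlonglongrightarrow> g i" by auto
    have "bounded (range (\<lambda>k. f (r k) j))"
      using insert.prems by (intro boundedI[of _ B]) auto
    then obtain l r2 where lr: "strict_mono r2" "((\<lambda>k. f (r k) j) \<circ> r2) \<longlonglongrightarrow> l"
      using bounded_imp_convergent_subsequence by blast
    have "(\<lambda>k. f ((r \<circ> r2) k) i) \<longlonglongrightarrow> (g(j := l)) i" if "i \<in> insert j K" for i
    proof (cases "i = j")
      case False
      then have "((\<lambda>k. f (r k) i) \<circ> r2) \<longlonglongrightarrow> g i"
        using that rg(2) lr(1) by (intro LIMSEQ_subseq_LIMSEQ) auto
      then show ?thesis using False by (simp add: o_def)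
    qed (use lr(2) in \<open>simp add: o_def\<close>)
    moreover have "strict_mono (r \<circ> r2)" using rg(1) lr(1) by (rule strict_mono_o)
    ultimately show ?case by blast
  qed
  then show ?thesis using that by blast
qed

lemma finite_range_constant_subseq:
  fixes g :: "nat \<Rightarrow> 'b"
  assumes "finite X" "\<forall>k. g k \<in> X"
  obtains r :: "nat \<Rightarrow> nat" and x where "strict_mono r" "\<forall>k. g (r k) = x"
proof -
  have "range g \<subseteq> X" using assms(2) by blast
  then have "finite (range g)" using assms(1) by (rule finite_subset)
  then obtain k0 where "infinite {k \<in> UNIV. g k = g k0}"
    using pigeonhole_infinite[OF infinite_UNIV_nat] by blast
  from infinite_enumerate[OF this] obtain r :: "nat \<Rightarrow> nat"
    where "strict_mono r" "\<forall>k. r k \<in> {k \<in> UNIV. g k = g k0}" by blast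
  then show ?thesis using that[of r "g k0"] by simp
qed

lemma frequently_imp_subseq:
  assumes "\<exists>\<^sub>F k in sequentially. P k"
  obtains r :: "nat \<Rightarrow> nat" where "strict_mono r" "\<forall>k. P (r k)"
proof -
  have "infinite {k. P k}" using assms by (simp add: frequently_cofinite flip: cofinite_eq_sequentially)
  then show ?thesis using infinite_enumerate that by blast
qed

lemma lindep_fam_limit:
  fixes V :: "nat \<Rightarrow> nat \<Rightarrow> 'a::real_normed_vector"
  assumes S: "finite S" and lim: "\<forall>i\<in>S. (\<lambda>k. V k i) \<longlonglongrightarrow> Vb i"
    and dep: "\<forall>k. lindep_fam S (V k)"
  shows "lindep_fam S Vb"
proof -
  have "\<forall>k. \<exists>c. (\<Sum>i\<in>S. \<bar>c i\<bar>) = 1 \<and> (\<Sum>i\<in>S. c i *\<^sub>R V k i) = 0"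
    using dep unfolding lindep_fam_normalized[OF S] by blast
  then obtain C where "\<forall>k. (\<Sum>i\<in>S. \<bar>C k i\<bar>) = 1 \<and> (\<Sum>i\<in>S. C k i *\<^sub>R V k i) = 0"
    by (auto dest: choice)
  then have C: "\<And>k. (\<Sum>i\<in>S. \<bar>C k i\<bar>) = 1" "\<And>k. (\<Sum>i\<in>S. C k i *\<^sub>R V k i) = 0"
    by auto
  have "\<bar>C k i\<bar> \<le> 1" if "i \<in> S" for k i
    using member_le_sum[of i S "\<lambda>i. \<bar>C k i\<bar>"] that S C(1)[of k] by simp
  then obtain r g where rg: "strict_mono r" "\<forall>i\<in>S. (\<lambda>k. C (r k) i) \<longlonglongrightarrow> g i"
    using bounded_family_convergent_subseq[OF S] by blast
  have V_r: "(\<lambda>k. V (r k) i) \<longlonglongrightarrow> Vb i" if "i \<in> S" for i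
    using LIMSEQ_subseq_LIMSEQ[OF lim[rule_format, OF that] rg(1)] by (simp add: o_def)
  have "(\<lambda>k. \<Sum>i\<in>S. \<bar>C (r k) i\<bar>) \<longlonglongrightarrow> (\<Sum>i\<in>S. \<bar>g i\<bar>)"
    using rg(2) by (intro tendsto_sum tendsto_rabs) auto
  then have "(\<lambda>k. 1) \<longlonglongrightarrow> (\<Sum>i\<in>S. \<bar>g i\<bar>)" using C(1) by simp
  then have "(\<Sum>i\<in>S. \<bar>g i\<bar>) = 1" by (rule LIMSEQ_unique[OF tendsto_const, symmetric])
  moreover have "(\<lambda>k. \<Sum>i\<in>S. C (r k) i *\<^sub>R V (r k) i) \<longlonglongrightarrow> (\<Sum>i\<in>S. g i *\<^sub>R Vb i)"
    using rg(2) V_r by (intro tendsto_sum tendsto_scaleR) auto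
  then have "(\<lambda>k. 0) \<longlonglongrightarrow> (\<Sum>i\<in>S. g i *\<^sub>R Vb i)" using C(2) by simp
  then have "(\<Sum>i\<in>S. g i *\<^sub>R Vb i) = 0" by (rule LIMSEQ_unique[OF tendsto_const, symmetric])
  ultimately show ?thesis unfolding lindep_fam_normalized[OF S] by blast
qed

lemma eventually_not_lindep_fam:
  fixes V :: "nat \<Rightarrow> nat \<Rightarrow> 'a::real_normed_vector"
  assumes S: "finite S" and lim: "\<forall>i\<in>S. (\<lambda>k. V k i) \<longlonglongrightarrow> Vb i" and indep: "\<not> lindep_fam S Vb"
  shows "\<forall>\<^sub>F k in sequentially. \<not> lindep_fam S (V k)"
proof (rule ccontr)
  assume "\<not> ?thesis"
  then obtain r :: "nat \<Rightarrow> nat" where r: "strict_mono r" "\<forall>k. lindep_fam S (V (r k))"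
    using frequently_imp_subseq by (auto simp: not_eventually)
  have "(\<lambda>k. V (r k) i) \<longlonglongrightarrow> Vb i" if "i \<in> S" for i
    using LIMSEQ_subseq_LIMSEQ[OF lim[rule_format, OF that] r(1)] by (simp add: o_def)
  then show False using lindep_fam_limit[OF S _ r(2)] indep by blast
qed

lemma normalized_multipliers_convergent_subseq:
  fixes c :: "nat \<Rightarrow> nat \<Rightarrow> real"
  assumes K: "finite K"
  obtains R \<sigma> g where "strict_mono R" "(\<lambda>k. 1 / (1 + (\<Sum>i\<in>K. \<bar>c (R k) i\<bar>))) \<longlonglongrightarrow> \<sigma>"
    "\<forall>i\<in>K. (\<lambda>k. c (R k) i / (1 + (\<Sum>i\<in>K. \<bar>c (R k) i\<bar>))) \<longlonglongrightarrow> g i"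
proof -
  define s where "s k = 1 + (\<Sum>i\<in>K. \<bar>c k i\<bar>)" for k
  have s_ge: "1 \<le> s k" for k by (simp add: s_def sum_nonneg)
  then have s_pos: "0 < s k" for k using less_le_trans zero_less_one by blast
  have "\<bar>1 / s k\<bar> \<le> 1" for k using s_ge[of k] s_pos[of k] by (simp add: divide_le_eq_1)
  then have "bounded (range (\<lambda>k. 1 / s k))" by (intro boundedI[of _ 1]) auto
  from bounded_imp_convergent_subsequence[OF this]
  obtain \<sigma> r1 where r1: "strict_mono r1" "((\<lambda>k. 1 / s k) \<circ> r1) \<longlonglongrightarrow> \<sigma>"
    by blast
  have "\<forall>k. \<forall>i\<in>K. \<bar>c (r1 k) i / s (r1 k)\<bar> \<le> 1"
  proof (intro allI ballI)
    fix k i assume "i \<in> K"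
    have "\<bar>c (r1 k) i\<bar> \<le> s (r1 k)"
      using member_le_sum[of i K "\<lambda>i. \<bar>c (r1 k) i\<bar>"] \<open>i \<in> K\<close> K by (simp add: s_def)
    then show "\<bar>c (r1 k) i / s (r1 k)\<bar> \<le> 1" using s_pos[of "r1 k"] by (simp add: abs_divide)
  qed
  then obtain r2 g where r2: "strict_mono r2"
    "\<forall>i\<in>K. (\<lambda>k. c (r1 (r2 k)) i / s (r1 (r2 k))) \<longlonglongrightarrow> g i"
    by (rule bounded_family_convergent_subseq[OF K])
  have "(\<lambda>k. 1 / s (r1 (r2 k))) \<longlonglongrightarrow> \<sigma>"
    using LIMSEQ_subseq_LIMSEQ[OF r1(2) r2(1)] by (simp add: o_def)
  with r2(2) strict_mono_o[OF r1(1) r2(1)] show ?thesis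
    using that[of "r1 \<circ> r2"] by (simp add: s_def)
qed

text \<open>In the second case the normalizing factor is t = 1 / (1 + sum of the absolute values of the
  multipliers).\<close>
lemma convergent_or_normalized_subseq:
  fixes c :: "nat \<Rightarrow> nat \<Rightarrow> real"
  assumes K: "finite K"
  obtains (convergent) R a where "strict_mono R" "\<forall>i\<in>K. (\<lambda>k. c (R k) i) \<longlonglongrightarrow> a i"
  | (normalized) R t g where "strict_mono R" "\<forall>k. 0 < t k" "t \<longlonglongrightarrow> 0"
      "\<forall>i\<in>K. (\<lambda>k. t k * c (R k) i) \<longlonglongrightarrow> g i" "\<exists>i\<in>K. g i \<noteq> 0"
proof -
  define s where "s k = 1 + (\<Sum>i\<in>K. \<bar>c k i\<bar>)" for k
  have s_pos: "0 < s k" for k by (simp add: s_def add_pos_nonneg sum_nonneg)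
  obtain R \<sigma> g where R: "strict_mono R" and inv_s: "(\<lambda>k. 1 / s (R k)) \<longlonglongrightarrow> \<sigma>"
    and quot: "\<forall>i\<in>K. (\<lambda>k. c (R k) i / s (R k)) \<longlonglongrightarrow> g i"
    unfolding s_def by (rule normalized_multipliers_convergent_subseq[OF K])
  have "0 \<le> \<sigma>"
    using inv_s by (rule LIMSEQ_le_const) (use s_pos in \<open>auto intro!: exI[of _ 0] less_imp_le\<close>)
  show ?thesis
  proof (cases "\<sigma> = 0")
    case False
    have "\<forall>i\<in>K. (\<lambda>k. c (R k) i) \<longlonglongrightarrow> g i / \<sigma>"
    proof
      fix i assume "i \<in> K"
      have "(\<lambda>k. (c (R k) i / s (R k)) / (1 / s (R k))) \<longlonglongrightarrow> g i / \<sigma>"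
        using quot \<open>i \<in> K\<close> inv_s False by (intro tendsto_divide) auto
      moreover have "(c (R k) i / s (R k)) / (1 / s (R k)) = c (R k) i" for k
        using s_pos[of "R k"] by simp
      ultimately show "(\<lambda>k. c (R k) i) \<longlonglongrightarrow> g i / \<sigma>" by simp
    qed
    then show ?thesis by (rule convergent[OF R])
  next
    case True
    define t where "t k = 1 / s (R k)" for k
    have t_pos: "\<forall>k. 0 < t k" using s_pos by (simp add: t_def)
    have "(\<lambda>k. \<Sum>i\<in>K. \<bar>c (R k) i / s (R k)\<bar>) \<longlonglongrightarrow> (\<Sum>i\<in>K. \<bar>g i\<bar>)"
      using quot by (intro tendsto_sum tendsto_rabs) auto
    moreover have "(\<Sum>i\<in>K. \<bar>c (R k) i / s (R k)\<bar>) = 1 - 1 / s (R k)" for k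
    proof -
      have "(\<Sum>i\<in>K. \<bar>c (R k) i / s (R k)\<bar>) = (\<Sum>i\<in>K. \<bar>c (R k) i\<bar>) / s (R k)"
        using s_pos[of "R k"] by (simp add: abs_divide sum_divide_distrib)
      also have "\<dots> = 1 - 1 / s (R k)" using s_pos[of "R k"] by (simp add: s_def field_simps)
      finally show ?thesis .
    qed
    moreover have "(\<lambda>k. 1 - 1 / s (R k)) \<longlonglongrightarrow> 1 - 0" using inv_s True by (intro tendsto_diff) auto
    ultimately have "(\<Sum>i\<in>K. \<bar>g i\<bar>) = 1" using LIMSEQ_unique by auto
    then have "\<exists>i\<in>K. g i \<noteq> 0" by (metis (mono_tags, lifting) abs_zero sum.neutral zero_neq_one)
    moreover have "\<forall>i\<in>K. (\<lambda>k. t k * c (R k) i) \<longlonglongrightarrow> g i" using quot by (simp add: t_def)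
    moreover have "t \<longlonglongrightarrow> 0" using inv_s True by (simp add: t_def[abs_def])
    ultimately show ?thesis using normalized[OF R t_pos] by blast
  qed
qed

text \<open>Clause (iii) of RCPLD, for a fixed choice of the basis S.\<close>
definition rcpld_dependence ::
    "nat \<Rightarrow> (nat \<Rightarrow> 'a \<Rightarrow> real) \<Rightarrow> (nat \<Rightarrow> 'a \<Rightarrow> 'a::real_normed_vector) \<Rightarrow> 'a set \<Rightarrow> 'a
      \<Rightarrow> nat set \<Rightarrow> bool" where
  "rcpld_dependence m1 G G' D wb S \<longleftrightarrow>
     (\<forall>I \<subseteq> Iact m1 G wb. \<forall>l eta.
        (\<forall>i\<in>I. l i \<ge> 0) \<and> (\<exists>i\<in>I \<union> S. l i \<noteq> 0) \<and> eta \<in> ncone_lim D wb \<and>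
        (\<Sum>i\<in>I \<union> S. l i *\<^sub>R G' i wb) + eta = 0 \<longrightarrow>
        (\<exists>U V. open U \<and> wb \<in> U \<and> open V \<and> eta \<in> V \<and>
           (\<forall>w\<in>U. \<forall>e\<in>ncone_lim D w \<inter> V.
              (e \<noteq> 0 \<longrightarrow> lindep_with (I \<union> S) (\<lambda>i. G' i w) e) \<and>
              (e = 0 \<longrightarrow> lindep_fam (I \<union> S) (\<lambda>i. G' i w)))))"

lemma rcpld_dependenceD:
  assumes "rcpld_dependence m1 G G' D wb S" "I \<subseteq> Iact m1 G wb" "\<forall>i\<in>I. 0 \<le> l i"
    "\<exists>i\<in>I \<union> S. l i \<noteq> 0" "\<eta> \<in> ncone_lim D wb" "(\<Sum>i\<in>I \<union> S. l i *\<^sub>R G' i wb) + \<eta> = 0"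
  obtains U V where "open U" "wb \<in> U" "open V" "\<eta> \<in> V"
    "\<forall>w\<in>U. \<forall>e\<in>ncone_lim D w \<inter> V.
       (e \<noteq> 0 \<longrightarrow> lindep_with (I \<union> S) (\<lambda>i. G' i w) e) \<and> (e = 0 \<longrightarrow> lindep_fam (I \<union> S) (\<lambda>i. G' i w))"
proof -
  have "(\<forall>i\<in>I. 0 \<le> l i) \<and> (\<exists>i\<in>I \<union> S. l i \<noteq> 0) \<and> \<eta> \<in> ncone_lim D wb \<and>
      (\<Sum>i\<in>I \<union> S. l i *\<^sub>R G' i wb) + \<eta> = 0"
    using assms(3-6) by (intro conjI)
  from assms(1)[unfolded rcpld_dependence_def, THEN spec[of _ I], THEN mp, OF assms(2),
      THEN spec[of _ l], THEN spec[of _ \<eta>], THEN mp, OF this]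
  show ?thesis by (elim exE conjE) (rule that; assumption)
qed
lemma RCPLD_E:
  assumes "RCPLD m1 m2 G G' D wb"
  obtains U S where "open U" "wb \<in> U"
    "\<forall>w\<in>U. dim ((\<lambda>i. G' i w) ` Jset m1 m2) = dim ((\<lambda>i. G' i wb) ` Jset m1 m2)"
    "S \<subseteq> Jset m1 m2" "\<not> lindep_fam S (\<lambda>i. G' i wb)"
    "span ((\<lambda>i. G' i wb) ` S) = span ((\<lambda>i. G' i wb) ` Jset m1 m2)"
    "rcpld_dependence m1 G G' D wb S"
proof -
  have "(\<exists>U. open U \<and> wb \<in> U \<and>
        (\<forall>w\<in>U. dim ((\<lambda>i. G' i w) ` Jset m1 m2) = dim ((\<lambda>i. G' i wb) ` Jset m1 m2))) \<and>
     (\<exists>S \<subseteq> Jset m1 m2. \<not> lindep_fam S (\<lambda>i. G' i wb) \<and>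
        span ((\<lambda>i. G' i wb) ` S) = span ((\<lambda>i. G' i wb) ` Jset m1 m2) \<and>
        rcpld_dependence m1 G G' D wb S)"
    using assms unfolding RCPLD_def rcpld_dependence_def .
  then obtain U S where U: "open U" "wb \<in> U"
    "\<forall>w\<in>U. dim ((\<lambda>i. G' i w) ` Jset m1 m2) = dim ((\<lambda>i. G' i wb) ` Jset m1 m2)"
    and S: "S \<subseteq> Jset m1 m2" "\<not> lindep_fam S (\<lambda>i. G' i wb)"
    "span ((\<lambda>i. G' i wb) ` S) = span ((\<lambda>i. G' i wb) ` Jset m1 m2)"
    "rcpld_dependence m1 G G' D wb S"
    by blast
  show ?thesis by (rule that[OF U S])
qed

lemma Mset_limit_of_convergent_multipliers:
  fixes G' :: "nat \<Rightarrow> 'a \<Rightarrow> 'a::real_normed_vector"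
  assumes w: "w \<longlonglongrightarrow> wb" and u: "u \<longlonglongrightarrow> v"
    and G'_lim: "\<forall>i\<in>P \<union> S. (\<lambda>k. G' i (w k)) \<longlonglongrightarrow> G' i wb"
    and c_lim: "\<forall>i\<in>P \<union> S. (\<lambda>k. c k i) \<longlonglongrightarrow> a i"
    and rep: "\<forall>k. reduced_representation D G' S (w k) (u k) P (c k) (\<eta> k)"
    and feasible: "Gvec (m1 + m2) G wb \<in> Cset m1 m2" and wb: "wb \<in> D"
    and P: "P \<subseteq> Iact m1 G wb" and S: "S \<subseteq> Jset m1 m2"
  shows "v \<in> Mset m1 m2 G G' D wb (\<lambda>_. 0)"
proof -
  have \<eta>_eq: "\<eta> k = u k - (\<Sum>i\<in>P \<union> S. c k i *\<^sub>R G' i (w k))" for k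
    using rep by (simp add: reduced_representation_def)
  have "\<eta> \<longlonglongrightarrow> v - (\<Sum>i\<in>P \<union> S. a i *\<^sub>R G' i wb)"
    unfolding \<eta>_eq using u c_lim G'_lim by (intro tendsto_diff tendsto_sum tendsto_scaleR) auto
  then have \<eta>_lim: "v - (\<Sum>i\<in>P \<union> S. a i *\<^sub>R G' i wb) \<in> ncone_lim D wb"
    using ncone_lim_closed_graph[OF w _ _ wb] rep by (auto simp: reduced_representation_def)
  have "0 \<le> a i" if "i \<in> P" for i
    using c_lim that rep by (intro LIMSEQ_le_const[of "\<lambda>k. c k i"]) (auto simp: reduced_representation_def)
  then have "(\<Sum>i\<in>P \<union> S. a i *\<^sub>R G' i wb) + (v - (\<Sum>i\<in>P \<union> S. a i *\<^sub>R G' i wb))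
      \<in> Mset m1 m2 G G' D wb (\<lambda>_. 0)"
    using sum_plus_ncone_lim_mem_Mset[OF feasible P S _ \<eta>_lim] by blast
  then show ?thesis by simp
qed

lemma scaled_normals_tendsto:
  fixes G' :: "nat \<Rightarrow> 'a \<Rightarrow> 'a::real_normed_vector"
  assumes u: "u \<longlonglongrightarrow> v" and G'_lim: "\<forall>i\<in>P \<union> S. (\<lambda>k. G' i (w k)) \<longlonglongrightarrow> G' i wb"
    and t_lim: "t \<longlonglongrightarrow> 0" and g_lim: "\<forall>i\<in>P \<union> S. (\<lambda>k. t k * c k i) \<longlonglongrightarrow> g i"
    and rep: "\<forall>k. reduced_representation D G' S (w k) (u k) P (c k) (\<eta> k)"
  shows "(\<lambda>k. t k *\<^sub>R \<eta> k) \<longlonglongrightarrow> - (\<Sum>i\<in>P \<union> S. g i *\<^sub>R G' i wb)"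
proof -
  have "t k *\<^sub>R \<eta> k = t k *\<^sub>R u k - (\<Sum>i\<in>P \<union> S. (t k * c k i) *\<^sub>R G' i (w k))" for k
    using rep by (simp add: reduced_representation_def scaleR_add_right scaleR_sum_right)
  moreover have "(\<lambda>k. t k *\<^sub>R u k - (\<Sum>i\<in>P \<union> S. (t k * c k i) *\<^sub>R G' i (w k)))
      \<longlonglongrightarrow> 0 *\<^sub>R v - (\<Sum>i\<in>P \<union> S. g i *\<^sub>R G' i wb)"
    using t_lim u g_lim G'_lim by (intro tendsto_diff tendsto_scaleR tendsto_sum) auto
  ultimately show ?thesis by simp
qed

lemma rcpld_excludes_divergent_multipliers:
  fixes G' :: "nat \<Rightarrow> 'a \<Rightarrow> 'a::real_normed_vector"
  assumes w: "w \<longlonglongrightarrow> wb" and u: "u \<longlonglongrightarrow> v"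
    and G'_lim: "\<forall>i\<in>P \<union> S. (\<lambda>k. G' i (w k)) \<longlonglongrightarrow> G' i wb"
    and t_pos: "\<forall>k. 0 < t k" and t_lim: "t \<longlonglongrightarrow> 0"
    and g_lim: "\<forall>i\<in>P \<union> S. (\<lambda>k. t k * c k i) \<longlonglongrightarrow> g i" and g: "\<exists>i\<in>P \<union> S. g i \<noteq> 0"
    and rep: "\<forall>k. reduced_representation D G' S (w k) (u k) P (c k) (\<eta> k)"
    and wb: "wb \<in> D" and P: "P \<subseteq> Iact m1 G wb" and S: "S \<subseteq> Jset m1 m2"
    and rcpld: "rcpld_dependence m1 G G' D wb S"
  shows False
proof -
  define e where "e k = t k *\<^sub>R \<eta> k" for k
  have e_in: "e k \<in> ncone_lim D (w k)" for k
    using rep t_pos unfolding e_def reduced_representation_def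
    by (intro ncone_lim_scaleR) (auto intro: less_imp_le)
  have e_lim: "e \<longlonglongrightarrow> - (\<Sum>i\<in>P \<union> S. g i *\<^sub>R G' i wb)"
    unfolding e_def[abs_def] by (rule scaled_normals_tendsto[OF u G'_lim t_lim g_lim rep])
  define eb where "eb = - (\<Sum>i\<in>P \<union> S. g i *\<^sub>R G' i wb)"
  have "eb \<in> ncone_lim D wb"
    using ncone_lim_closed_graph[OF w e_lim _ wb] e_in by (simp add: eb_def)
  moreover have "\<forall>i\<in>P. 0 \<le> g i"
  proof
    fix i assume "i \<in> P"
    have "0 \<le> t k * c k i" for k
      using rep t_pos \<open>i \<in> P\<close> by (simp add: reduced_representation_def less_imp_le)
    then show "0 \<le> g i"
      using g_lim \<open>i \<in> P\<close> by (intro LIMSEQ_le_const[of "\<lambda>k. t k * c k i"]) auto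
  qed
  moreover have "(\<Sum>i\<in>P \<union> S. g i *\<^sub>R G' i wb) + eb = 0" by (simp add: eb_def)
  ultimately obtain U V where UV: "open U" "wb \<in> U" "open V" "eb \<in> V"
    "\<forall>w\<in>U. \<forall>e\<in>ncone_lim D w \<inter> V.
       (e \<noteq> 0 \<longrightarrow> lindep_with (P \<union> S) (\<lambda>i. G' i w) e) \<and> (e = 0 \<longrightarrow> lindep_fam (P \<union> S) (\<lambda>i. G' i w))"
    using rcpld_dependenceD[OF rcpld P _ g] by blast
  have "\<forall>\<^sub>F k in sequentially. w k \<in> U \<and> e k \<in> V"
    using topological_tendstoD[OF w UV(1,2)] topological_tendstoD[OF e_lim[folded eb_def] UV(3,4)] by (rule eventually_conj)
  then obtain k where k: "w k \<in> U" "e k \<in> V" using eventually_happens'[OF sequentially_bot] by blast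
  show False
  proof (cases "e k = 0")
    case True
    then have "lindep_fam (P \<union> S) (\<lambda>i. G' i (w k))" using UV(5) k e_in by blast
    then show False using rep by (simp add: reduced_representation_def)
  next
    case False
    then have "lindep_with (P \<union> S) (\<lambda>i. G' i (w k)) (t k *\<^sub>R \<eta> k)" using UV(5) k e_in by (auto simp: e_def)
    moreover have "\<eta> k \<noteq> 0" using False by (simp add: e_def)
    moreover have "t k \<noteq> 0" using t_pos by (metis less_irrefl)
    ultimately show False using rep by (simp add: reduced_representation_def lindep_with_scaleR)
  qed
qed

lemma Mset_limit_of_reduced_representations:
  fixes G' :: "nat \<Rightarrow> 'a \<Rightarrow> 'a::real_normed_vector"
  assumes w: "w \<longlonglongrightarrow> wb" and u: "u \<longlonglongrightarrow> v"
    and G'_lim: "\<forall>i\<in>Iact m1 G wb \<union> S. (\<lambda>k. G' i (w k)) \<longlonglongrightarrow> G' i wb"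
    and rep: "\<forall>k. \<exists>P c \<eta>. P \<subseteq> Iact m1 G wb \<and> reduced_representation D G' S (w k) (u k) P c \<eta>"
    and feasible: "Gvec (m1 + m2) G wb \<in> Cset m1 m2" and wb: "wb \<in> D"
    and S: "S \<subseteq> Jset m1 m2" and rcpld: "rcpld_dependence m1 G G' D wb S"
  shows "v \<in> Mset m1 m2 G G' D wb (\<lambda>_. 0)"
proof -
  have "\<exists>P c \<eta>. \<forall>k. P k \<subseteq> Iact m1 G wb \<and>
      reduced_representation D G' S (w k) (u k) (P k) (c k) (\<eta> k)"
    using rep by (simp only: choice_iff)
  then obtain P c \<eta> where P: "\<forall>k. P k \<in> Pow (Iact m1 G wb)"
    and rep: "\<forall>k. reduced_representation D G' S (w k) (u k) (P k) (c k) (\<eta> k)"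
    by blast
  obtain r :: "nat \<Rightarrow> nat" and P0 where r: "strict_mono r" "\<forall>k. P (r k) = P0"
    using finite_range_constant_subseq[OF finite_Pow_iff[THEN iffD2, OF finite_Iact] P] by blast
  have P0: "P0 \<subseteq> Iact m1 G wb" using P[rule_format, of "r 0"] r(2) by simp
  have rep0: "\<forall>k. reduced_representation D G' S (w (r (R k))) (u (r (R k))) P0 (c (r (R k))) (\<eta> (r (R k)))"
    for R
  proof
    fix k
    show "reduced_representation D G' S (w (r (R k))) (u (r (R k))) P0 (c (r (R k))) (\<eta> (r (R k)))"
      using rep[rule_format, of "r (R k)"] r(2) by simp
  qed
  have fin: "finite (P0 \<union> S)"
    using finite_subset[OF P0 finite_Iact] finite_subset[OF S finite_Jset] by blast
  have sub: "(\<lambda>k. X (r (R k))) \<longlonglongrightarrow> L" if "X \<longlonglongrightarrow> L" "strict_mono R" for X :: "nat \<Rightarrow> 'b::topological_space" and L R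
    using LIMSEQ_subseq_LIMSEQ[OF that(1) strict_mono_o[OF r(1) that(2)]] by (simp add: o_def)
  have G'_lim0: "\<forall>i\<in>P0 \<union> S. (\<lambda>k. G' i (w (r (R k)))) \<longlonglongrightarrow> G' i wb" if "strict_mono R" for R
    using G'_lim P0 sub[OF _ that] by blast
  show ?thesis
  proof (rule convergent_or_normalized_subseq[OF fin, of "\<lambda>k. c (r k)"])
    fix R a assume R: "strict_mono R" and a: "\<forall>i\<in>P0 \<union> S. (\<lambda>k. c (r (R k)) i) \<longlonglongrightarrow> a i"
    show ?thesis
      using Mset_limit_of_convergent_multipliers[OF sub[OF w R] sub[OF u R] G'_lim0[OF R] a rep0
          feasible wb P0 S] .
  next
    fix R t g assume R: "strict_mono R" and t: "\<forall>k. 0 < t k" "t \<longlonglongrightarrow> 0"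
      and g: "\<forall>i\<in>P0 \<union> S. (\<lambda>k. t k * c (r (R k)) i) \<longlonglongrightarrow> g i" "\<exists>i\<in>P0 \<union> S. g i \<noteq> 0"
    show ?thesis
      using rcpld_excludes_divergent_multipliers[OF sub[OF w R] sub[OF u R] G'_lim0[OF R] t g rep0
          wb P0 S rcpld] by (rule FalseE)
  qed
qed

lemma eventually_strictly_inactive:
  fixes G :: "nat \<Rightarrow> 'a::t2_space \<Rightarrow> real"
  assumes feasible: "Gvec (m1 + m2) G wb \<in> Cset m1 m2" and cont: "\<forall>i\<in>{1..m1}. isCont (G i) wb"
    and w: "w \<longlonglongrightarrow> wb" and z: "\<forall>i. (\<lambda>k. z k i) \<longlonglongrightarrow> 0"
  shows "\<forall>\<^sub>F k in sequentially. \<forall>i\<in>{1..m1} - Iact m1 G wb. G i (w k) < z k i"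
proof (rule eventually_ball_finite)
  show "\<forall>i\<in>{1..m1} - Iact m1 G wb. \<forall>\<^sub>F k in sequentially. G i (w k) < z k i"
  proof
    fix i assume i: "i \<in> {1..m1} - Iact m1 G wb"
    then have "G i wb \<le> 0" using feasible by (auto simp: Cset_def Gvec_def)
    moreover have "G i wb \<noteq> 0" using i by (simp add: Iact_def)
    moreover have "(\<lambda>k. G i (w k) - z k i) \<longlonglongrightarrow> G i wb - 0"
      using isCont_tendsto_compose[OF cont[rule_format] w] z i by (intro tendsto_diff) auto
    ultimately have "\<forall>\<^sub>F k in sequentially. G i (w k) - z k i < 0"
      by (intro order_tendstoD(2)) auto
    then show "\<forall>\<^sub>F k in sequentially. G i (w k) < z k i" by (rule eventually_mono) simp
  qed
qed simp

lemma eventually_reduced_representation: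
  fixes G :: "nat \<Rightarrow> 'a::euclidean_space \<Rightarrow> real" and G' :: "nat \<Rightarrow> 'a \<Rightarrow> 'a"
  assumes w: "w \<longlonglongrightarrow> wb" and z: "\<forall>i. (\<lambda>k. z k i) \<longlonglongrightarrow> 0"
    and uM: "\<forall>k. u k \<in> Mset m1 m2 G G' D (w k) (z k)"
    and feasible: "Gvec (m1 + m2) G wb \<in> Cset m1 m2" and G_cont: "\<forall>i\<in>{1..m1}. isCont (G i) wb"
    and G'_lim: "\<forall>i\<in>S. (\<lambda>k. G' i (w k)) \<longlonglongrightarrow> G' i wb"
    and U: "open U" "wb \<in> U"
    and rank: "\<forall>w\<in>U. dim ((\<lambda>i. G' i w) ` Jset m1 m2) = dim ((\<lambda>i. G' i wb) ` Jset m1 m2)"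
    and S: "S \<subseteq> Jset m1 m2" "\<not> lindep_fam S (\<lambda>i. G' i wb)"
      "span ((\<lambda>i. G' i wb) ` S) = span ((\<lambda>i. G' i wb) ` Jset m1 m2)"
  shows "\<forall>\<^sub>F k in sequentially.
    \<exists>P c \<eta>. P \<subseteq> Iact m1 G wb \<and> reduced_representation D G' S (w k) (u k) P c \<eta>"
proof -
  have fS: "finite S" using finite_subset[OF S(1) finite_Jset] .
  have "dim ((\<lambda>i. G' i wb) ` Jset m1 m2) = dim (span ((\<lambda>i. G' i wb) ` Jset m1 m2))"
    by (rule dim_span[symmetric])
  also have "\<dots> = dim ((\<lambda>i. G' i wb) ` S)" by (simp only: S(3)[symmetric] dim_span)
  also have "\<dots> = card S" by (rule dim_image_not_lindep_fam[OF S(2) fS])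
  finally have "\<forall>\<^sub>F k in sequentially. dim ((\<lambda>i. G' i (w k)) ` Jset m1 m2) \<le> card S"
    using rank by (intro eventually_mono[OF topological_tendstoD[OF w U]]) simp
  moreover have "\<forall>\<^sub>F k in sequentially. \<not> lindep_fam S (\<lambda>i. G' i (w k))"
    using eventually_not_lindep_fam[OF fS G'_lim S(2)] .
  moreover have "\<forall>\<^sub>F k in sequentially. \<forall>i\<in>{1..m1} - Iact m1 G wb. G i (w k) < z k i"
    using eventually_strictly_inactive[OF feasible G_cont w z] .
  ultimately show ?thesis
  proof eventually_elim
    case (elim k)
    have "Iact m1 G wb \<subseteq> {1..m1}" by (auto simp: Iact_def)
    then obtain P c \<eta> where "P \<subseteq> Iact m1 G wb" "reduced_representation D G' S (w k) (u k) P c \<eta>"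
      by (rule Mset_reduced_representation[OF uM[rule_format, of k] elim(3) _ S(1) elim(2,1)])
    then show ?case by blast
  qed
qed

lemma Mset_limit_under_RCPLD:
  fixes G :: "nat \<Rightarrow> 'a::euclidean_space \<Rightarrow> real" and G' :: "nat \<Rightarrow> 'a \<Rightarrow> 'a"
  assumes rcpld: "RCPLD m1 m2 G G' D wb"
    and feasible: "Gvec (m1 + m2) G wb \<in> Cset m1 m2" and wb: "wb \<in> D"
    and G_cont: "\<forall>i\<in>{1..m1}. isCont (G i) wb" and G'_cont: "\<forall>i\<in>{1..m1 + m2}. isCont (G' i) wb"
    and w: "w \<longlonglongrightarrow> wb" and z: "\<forall>i. (\<lambda>k. z k i) \<longlonglongrightarrow> 0" and u: "u \<longlonglongrightarrow> v"
    and uM: "\<forall>k. u k \<in> Mset m1 m2 G G' D (w k) (z k)"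
  shows "v \<in> Mset m1 m2 G G' D wb (\<lambda>_. 0)"
proof -
  obtain U S where U: "open U" "wb \<in> U"
    "\<forall>w\<in>U. dim ((\<lambda>i. G' i w) ` Jset m1 m2) = dim ((\<lambda>i. G' i wb) ` Jset m1 m2)"
    and S: "S \<subseteq> Jset m1 m2" "\<not> lindep_fam S (\<lambda>i. G' i wb)"
      "span ((\<lambda>i. G' i wb) ` S) = span ((\<lambda>i. G' i wb) ` Jset m1 m2)"
    and dep: "rcpld_dependence m1 G G' D wb S"
    by (rule RCPLD_E[OF rcpld])
  have "Iact m1 G wb \<union> S \<subseteq> {1..m1 + m2}" using S(1) by (auto simp: Iact_def Jset_def)
  then have G'_lim: "\<forall>i\<in>Iact m1 G wb \<union> S. (\<lambda>k. G' i (w k)) \<longlonglongrightarrow> G' i wb"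
    using G'_cont isCont_tendsto_compose[OF _ w] by blast
  have "\<forall>\<^sub>F k in sequentially.
      \<exists>P c \<eta>. P \<subseteq> Iact m1 G wb \<and> reduced_representation D G' S (w k) (u k) P c \<eta>"
    using G'_lim by (intro eventually_reduced_representation[OF w z uM feasible G_cont _ U S]) auto
  then obtain N where "\<forall>k. \<exists>P c \<eta>. P \<subseteq> Iact m1 G wb \<and>
      reduced_representation D G' S (w (k + N)) (u (k + N)) P c \<eta>"
    unfolding eventually_sequentially by (metis le_add2)
  from Mset_limit_of_reduced_representations[OF LIMSEQ_ignore_initial_segment[OF w]
      LIMSEQ_ignore_initial_segment[OF u] _ this feasible wb S(1) dep]
  show ?thesis using G'_lim LIMSEQ_ignore_initial_segment by blast
qed

theorem mainTheorem1:
  fixes G :: "nat \<Rightarrow> 'a::euclidean_space \<Rightarrow> real"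
    and G' :: "nat \<Rightarrow> 'a \<Rightarrow> 'a"
    and D :: "'a set"
    and m1 m2 :: nat
    and wb :: 'a
  assumes "\<forall>i\<in>{1..m1+m2}. \<forall>w. (G i has_derivative (\<lambda>h. G' i w \<bullet> h)) (at w)"
    and "\<forall>i\<in>{1..m1+m2}. continuous_on UNIV (G' i)"
    and "closed D" and "D \<noteq> {}"
    and "Gvec (m1+m2) G wb \<in> Cset m1 m2" and "wb \<in> D"
    and "RCPLD m1 m2 G G' D wb"
  shows "AM_regular m1 m2 G G' D wb"
proof -
  have G_cont: "\<forall>i\<in>{1..m1}. isCont (G i) wb"
  proof
    fix i :: nat assume "i \<in> {1..m1}"
    then have "(G i has_derivative (\<lambda>h. G' i wb \<bullet> h)) (at wb)" using assms(1) by simp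
    then show "isCont (G i) wb" by (rule has_derivative_continuous)
  qed
  have G'_cont: "\<forall>i\<in>{1..m1 + m2}. isCont (G' i) wb"
    using assms(2) by (simp add: continuous_on_eq_continuous_at)
  show ?thesis unfolding AM_regular_def
  proof (intro subsetI, elim CollectE exE conjE)
    fix v w z u
    assume "w \<longlonglongrightarrow> wb" "\<forall>i. (\<lambda>k. z k i) \<longlonglongrightarrow> 0" "u \<longlonglongrightarrow> v"
      "\<forall>k. u k \<in> Mset m1 m2 G G' D (w k) (z k)"
    then show "v \<in> Mset m1 m2 G G' D wb (\<lambda>_. 0)"
      by (rule Mset_limit_under_RCPLD[OF assms(7,5,6) G_cont G'_cont])
  qed
qed

end
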